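(* There exists a universal constant $C$ such that for every integer $k\ge C$ and every 3-regular graph $G$, $\mathrm{Opt}(G)<\frac{332}{331}\,\mathrm{MaxCut}(G)$.
   Context: For a 3-regular graph $G$ on $n$ vertices with adjacency matrix $A$, let $Q_G=\frac12\big(I-\frac13A\big)$, $\mathrm{MaxCut}(G)=\max_{x\in\{\pm1/\sqrt n\}^n}x^TQ_Gx$, $p_G(x)=(x^TQ_Gx)\prod_{i=1}^n(nx_i^2)^k$ for $x\in\mathbb{R}^n$ (with $k$ a positive integer), and $\mathrm{Opt}(G)=\max_{x\in\mathbb{R}^n,\ \|x\|_2=1}p_G(x)$. *)

theory Defs
  imports Complex_Main
begin

definition cubic_graph :: "nat \<Rightarrow> (nat \<Rightarrow> nat \<Rightarrow> bool) \<Rightarrow> bool" where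
  "cubic_graph n E \<longleftrightarrow>
     (\<forall>i<n. \<forall>j<n. E i j \<longleftrightarrow> E j i) \<and>
     (\<forall>i<n. \<not> E i i) \<and>
     (\<forall>i<n. card {j. j < n \<and> E i j} = 3)"

definition adj :: "(nat \<Rightarrow> nat \<Rightarrow> bool) \<Rightarrow> nat \<Rightarrow> nat \<Rightarrow> real" where
  "adj E i j = (if E i j then 1 else 0)"

text \<open>Quadratic form x^T Q_G x with Q_G = 1/2 (I - A/3); vectors of R^n are
  functions nat => real, only the coordinates 0..<n matter.\<close>
definition QG :: "nat \<Rightarrow> (nat \<Rightarrow> nat \<Rightarrow> bool) \<Rightarrow> (nat \<Rightarrow> real) \<Rightarrow> real" where
  "QG n E x = (1/2) * ((\<Sum>i<n. (x i)^2)
      - (1/3) * (\<Sum>i<n. \<Sum>j<n. adj E i j * x i * x j))"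

definition MaxCut :: "nat \<Rightarrow> (nat \<Rightarrow> nat \<Rightarrow> bool) \<Rightarrow> real" where
  "MaxCut n E = Max (QG n E ` {x. (\<forall>i<n. x i = 1 / sqrt n \<or> x i = - (1 / sqrt n))
                                  \<and> (\<forall>i\<ge>n. x i = 0)})"

definition pG :: "nat \<Rightarrow> (nat \<Rightarrow> nat \<Rightarrow> bool) \<Rightarrow> nat \<Rightarrow> (nat \<Rightarrow> real) \<Rightarrow> real" where
  "pG n E k x = QG n E x * (\<Prod>i<n. (real n * (x i)^2) ^ k)"

text \<open>Opt(G): maximum of p_G over the unit sphere of R^n (attained by compactness,
  so it equals the supremum).\<close>
definition Opt :: "nat \<Rightarrow> (nat \<Rightarrow> nat \<Rightarrow> bool) \<Rightarrow> nat \<Rightarrow> real" where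
  "Opt n E k = Sup (pG n E k ` {x. (\<Sum>i<n. (x i)^2) = 1 \<and> (\<forall>i\<ge>n. x i = 0)})"

end

theory Submission
  imports Defs
begin

text \<open>No single sign flip improves a maximising sign vector, which forces
  MaxCut(G) \<ge> 1/2; so it suffices to show Opt(G) \<le> MaxCut(G) + 1/1000. Round a unit
  vector x to the sign vector s with the same signs and let D = |x - s|^2. The product
  \<Prod> n x_i^2 is at most exp(-n D), so p_G(x) \<le> exp(-k D) \<le> 1/2 once D is not tiny;
  if D is tiny, x^T Q x exceeds s^T Q s \<le> MaxCut(G) by little, because the adjacency
  form of a graph of degree 3 is bounded by 3 |u| |v|.\<close>

lemma abs_mult_le_weighted_squares:
  fixes t u v :: real
  assumes "t > 0"
  shows "\<bar>u * v\<bar> \<le> (t * u^2 + v^2 / t) / 2"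
proof -
  have "0 \<le> (t * \<bar>u\<bar> - \<bar>v\<bar>)^2 / t" using assms by simp
  then show ?thesis using assms
    by (simp add: power2_diff power2_eq_square abs_mult field_simps)
qed

lemma le_exp_two_sqrt_minus_two:
  fixes y :: real
  assumes "0 \<le> y"
  shows "y \<le> exp (2 * sqrt y - 2)"
proof -
  have "sqrt y \<le> exp (sqrt y - 1)" using exp_ge_add_one_self[of "sqrt y - 1"] by simp
  then have "(sqrt y)^2 \<le> (exp (sqrt y - 1))^2" using assms by (intro power_mono) auto
  then show ?thesis using assms by (simp add: power2_eq_square exp_add[symmetric])
qed

lemma exp_minus_one_le_half: "exp (-1::real) \<le> 1/2"
  using exp_ge_add_one_self[of "1::real"] by (simp add: exp_minus field_simps)

definition adj_form :: "nat \<Rightarrow> (nat \<Rightarrow> nat \<Rightarrow> bool) \<Rightarrow> (nat \<Rightarrow> real) \<Rightarrow> (nat \<Rightarrow> real) \<Rightarrow> real"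
  where "adj_form n E u v = (\<Sum>i<n. \<Sum>j<n. adj E i j * u i * v j)"

lemma QG_eq_adj_form: "QG n E x = 1/2 * ((\<Sum>i<n. (x i)^2) - 1/3 * adj_form n E x x)"
  by (simp add: QG_def adj_form_def)

lemma adj_form_add:
  "adj_form n E (\<lambda>i. u i + v i) (\<lambda>i. u i + v i)
     = adj_form n E u u + adj_form n E u v + adj_form n E v u + adj_form n E v v"
  by (simp add: adj_form_def algebra_simps sum.distrib)

lemma cubic_graph_adj_commute:
  assumes "cubic_graph n E" "i < n" "j < n"
  shows "adj E i j = adj E j i"
  using assms by (simp add: cubic_graph_def adj_def)

lemma cubic_graph_adj_self:
  assumes "cubic_graph n E" "i < n"
  shows "adj E i i = 0"
  using assms by (simp add: cubic_graph_def adj_def)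

lemma cubic_graph_row_sum:
  assumes "cubic_graph n E" "i < n"
  shows "(\<Sum>j<n. adj E i j) = 3"
proof -
  have "(\<Sum>j<n. adj E i j) = real (card ({..<n} \<inter> Collect (E i)))"
    by (simp add: adj_def sum.If_cases)
  also have "{..<n} \<inter> Collect (E i) = {j. j < n \<and> E i j}" by auto
  finally show ?thesis using assms unfolding cubic_graph_def by simp
qed

lemma cubic_graph_column_sum:
  assumes "cubic_graph n E" "j < n"
  shows "(\<Sum>i<n. adj E i j) = 3"
  using cubic_graph_row_sum[OF assms] cubic_graph_adj_commute[OF assms(1) _ assms(2)]
  by (metis (no_types, lifting) lessThan_iff sum.cong)

lemma adj_form_commute:
  assumes "cubic_graph n E"
  shows "adj_form n E u v = adj_form n E v u"
proof -
  have "adj_form n E u v = (\<Sum>j<n. \<Sum>i<n. adj E i j * u i * v j)"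
    unfolding adj_form_def by (rule sum.swap)
  also have "\<dots> = adj_form n E v u"
    unfolding adj_form_def using cubic_graph_adj_commute[OF assms]
    by (intro sum.cong refl) (simp add: mult.commute mult.left_commute)
  finally show ?thesis .
qed

lemma cubic_graph_sum_adj_left:
  assumes "cubic_graph n E"
  shows "(\<Sum>i<n. \<Sum>j<n. adj E i j * f i) = 3 * (\<Sum>i<n. f i)"
proof -
  have "(\<Sum>i<n. \<Sum>j<n. adj E i j * f i) = (\<Sum>i<n. (\<Sum>j<n. adj E i j) * f i)"
    by (simp add: sum_distrib_right)
  also have "\<dots> = (\<Sum>i<n. 3 * f i)" using cubic_graph_row_sum[OF assms] by simp
  finally show ?thesis by (simp add: sum_distrib_left)
qed

lemma cubic_graph_sum_adj_right:
  assumes "cubic_graph n E"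
  shows "(\<Sum>i<n. \<Sum>j<n. adj E i j * f j) = 3 * (\<Sum>j<n. f j)"
proof -
  have "(\<Sum>i<n. \<Sum>j<n. adj E i j * f j) = (\<Sum>j<n. (\<Sum>i<n. adj E i j) * f j)"
    by (subst sum.swap) (simp add: sum_distrib_right)
  also have "\<dots> = (\<Sum>j<n. 3 * f j)" using cubic_graph_column_sum[OF assms] by simp
  finally show ?thesis by (simp add: sum_distrib_left)
qed

lemma abs_adj_form_le:
  assumes "cubic_graph n E" "t > 0"
  shows "\<bar>adj_form n E u v\<bar> \<le> 3/2 * (t * (\<Sum>i<n. (u i)^2) + (\<Sum>j<n. (v j)^2) / t)"
proof -
  have "\<bar>adj_form n E u v\<bar>
          \<le> (\<Sum>i<n. \<Sum>j<n. adj E i j * (t * (u i)^2) + adj E i j * ((v j)^2 / t)) / 2"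
    unfolding adj_form_def sum_divide_distrib
    using abs_mult_le_weighted_squares[OF assms(2)]
    by (intro order_trans[OF sum_abs] sum_mono order_trans[OF sum_abs])
       (simp add: adj_def abs_mult)
  also have "\<dots> = 3/2 * (t * (\<Sum>i<n. (u i)^2) + (\<Sum>j<n. (v j)^2) / t)"
    by (simp only: sum.distrib cubic_graph_sum_adj_left[OF assms(1)]
        cubic_graph_sum_adj_right[OF assms(1)] sum_distrib_left[symmetric] sum_divide_distrib[symmetric])
      simp
  finally show ?thesis .
qed

lemma QG_le_one:
  assumes "cubic_graph n E" "(\<Sum>i<n. (x i)^2) = 1"
  shows "QG n E x \<le> 1"
  using abs_adj_form_le[OF assms(1), of 1 x x] assms(2) unfolding QG_eq_adj_form by simp

lemma QG_le_perturbation: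
  fixes x s :: "nat \<Rightarrow> real"
  assumes "cubic_graph n E" "(\<Sum>i<n. (s i)^2) = 1" "t > 0"
  defines "D \<equiv> \<Sum>i<n. (x i - s i)^2"
  shows "QG n E x \<le> QG n E s + t + D / t + D"
proof -
  define d where "d i = x i - s i" for i
  have x: "x = (\<lambda>i. s i + d i)" by (auto simp: d_def)
  have D: "D = (\<Sum>i<n. (d i)^2)" by (simp add: D_def d_def)
  have norm_x: "(\<Sum>i<n. (x i)^2) = 1 + 2 * (\<Sum>i<n. s i * d i) + D"
    unfolding D assms(2)[symmetric] x
    by (simp add: power2_sum sum.distrib sum_distrib_left mult.assoc)
  have adj_x: "adj_form n E x x = adj_form n E s s + 2 * adj_form n E s d + adj_form n E d d"
    unfolding x adj_form_add using adj_form_commute[OF assms(1), of d s] by simp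
  have "(\<Sum>i<n. s i * d i) \<le> (\<Sum>i<n. (t * (s i)^2 + (d i)^2 / t) / 2)"
    by (intro sum_mono) (use abs_mult_le_weighted_squares[OF assms(3)] in \<open>meson abs_le_D1\<close>)
  also have "\<dots> = (t + D / t) / 2"
    by (simp add: D assms(2) sum_divide_distrib[symmetric] sum.distrib sum_distrib_left[symmetric])
  finally have cross: "(\<Sum>i<n. s i * d i) \<le> (t + D / t) / 2" .
  have sd: "- adj_form n E s d \<le> 3/2 * (t + D / t)"
    using abs_adj_form_le[OF assms(1,3), of s d] unfolding assms(2) D[symmetric] by (simp add: abs_le_iff)
  have dd: "- adj_form n E d d \<le> 3 * D"
    using abs_adj_form_le[OF assms(1), of 1 d d] unfolding D[symmetric] by (simp add: abs_le_iff)
  have "QG n E x = QG n E s + (\<Sum>i<n. s i * d i) + D / 2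
                     - 1/3 * adj_form n E s d - 1/6 * adj_form n E d d"
    unfolding QG_eq_adj_form norm_x adj_x assms(2) by (simp add: algebra_simps)
  then show ?thesis using cross sd dd by (simp add: field_simps)
qed

definition sign_vectors :: "nat \<Rightarrow> (nat \<Rightarrow> real) set" where
  "sign_vectors n = {x. (\<forall>i<n. x i = 1 / sqrt n \<or> x i = - (1 / sqrt n)) \<and> (\<forall>i\<ge>n. x i = 0)}"

lemma finite_sign_vectors: "finite (sign_vectors n)"
proof (rule finite_subset)
  show "sign_vectors n \<subseteq> {f. \<forall>i. (i \<in> {..<n} \<longrightarrow> f i \<in> {1 / sqrt n, - (1 / sqrt n)})
                                  \<and> (i \<notin> {..<n} \<longrightarrow> f i = 0)}"
    unfolding sign_vectors_def by auto
qed (rule finite_set_of_finite_funs; simp)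

lemma sum_squares_sign_vector:
  assumes "n > 0" "s \<in> sign_vectors n"
  shows "(\<Sum>i<n. (s i)^2) = 1"
proof -
  have "(\<Sum>i<n. (s i)^2) = (\<Sum>i<n. 1 / real n)"
    using assms(2) by (intro sum.cong) (auto simp: sign_vectors_def power_divide)
  then show ?thesis using assms(1) by simp
qed

lemma MaxCut_eq_Max_sign_vectors: "MaxCut n E = Max (QG n E ` sign_vectors n)"
  by (simp add: MaxCut_def sign_vectors_def)

lemma QG_le_MaxCut: "s \<in> sign_vectors n \<Longrightarrow> QG n E s \<le> MaxCut n E"
  unfolding MaxCut_eq_Max_sign_vectors by (simp add: finite_sign_vectors)

lemma MaxCut_attained: "\<exists>s\<in>sign_vectors n. QG n E s = MaxCut n E"
proof -
  have "(\<lambda>i. if i < n then 1 / sqrt n else 0) \<in> sign_vectors n"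
    by (simp add: sign_vectors_def)
  then have "MaxCut n E \<in> QG n E ` sign_vectors n"
    unfolding MaxCut_eq_Max_sign_vectors by (intro Max_in finite_imageI finite_sign_vectors) auto
  then show ?thesis by auto
qed

lemma adj_form_flip:
  assumes "cubic_graph n E" "i < n"
  shows "adj_form n E (u(i := - u i)) (u(i := - u i))
           = adj_form n E u u - 4 * u i * (\<Sum>j<n. adj E i j * u j)"
proof -
  define v where "v = (\<lambda>j. if j = i then -2 * u i else 0)"
  have flip: "u(i := - u i) = (\<lambda>j. u j + v j)" by (auto simp: v_def)
  have "adj_form n E u v = (\<Sum>j<n. adj E j i * u j * (-2 * u i))"
    unfolding adj_form_def v_def using assms(2) by (simp add: if_distrib cong: if_cong)
  also have "\<dots> = -2 * u i * (\<Sum>j<n. adj E i j * u j)"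
    using cubic_graph_adj_commute[OF assms] by (simp add: sum_distrib_left algebra_simps)
  finally have uv: "adj_form n E u v = -2 * u i * (\<Sum>j<n. adj E i j * u j)" .
  have vu: "adj_form n E v u = -2 * u i * (\<Sum>j<n. adj E i j * u j)"
    using uv adj_form_commute[OF assms(1)] by simp
  have vv: "adj_form n E v v = 0"
    unfolding adj_form_def v_def using cubic_graph_adj_self[OF assms]
    by (intro sum.neutral ballI) auto
  show ?thesis unfolding flip adj_form_add uv vu vv by simp
qed

text \<open>At a maximising sign vector no single sign flip helps, so each vertex contributes
  non-positively to the adjacency form.\<close>
lemma MaxCut_ge_half:
  assumes "n > 0" "cubic_graph n E"
  shows "1/2 \<le> MaxCut n E"
proof -
  obtain s where s: "s \<in> sign_vectors n" "QG n E s = MaxCut n E"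
    using MaxCut_attained by blast
  have local_opt: "s i * (\<Sum>j<n. adj E i j * s j) \<le> 0" if "i < n" for i
  proof -
    have "s(i := - s i) \<in> sign_vectors n" using s(1) that by (auto simp: sign_vectors_def)
    then have "QG n E (s(i := - s i)) \<le> QG n E s" using QG_le_MaxCut s(2) by metis
    moreover have "(\<Sum>j<n. ((s(i := - s i)) j)^2) = (\<Sum>j<n. (s j)^2)"
      by (rule sum.cong) auto
    ultimately show ?thesis
      unfolding QG_eq_adj_form adj_form_flip[OF assms(2) that] by simp
  qed
  have "adj_form n E s s = (\<Sum>i<n. s i * (\<Sum>j<n. adj E i j * s j))"
    unfolding adj_form_def by (simp add: sum_distrib_left algebra_simps)
  also have "\<dots> \<le> 0" using local_opt by (intro sum_nonpos) simp
  finally show ?thesis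
    using s sum_squares_sign_vector[OF assms(1) s(1)] unfolding QG_eq_adj_form by simp
qed

definition sign_round :: "nat \<Rightarrow> (nat \<Rightarrow> real) \<Rightarrow> nat \<Rightarrow> real" where
  "sign_round n x i = (if i < n then (if 0 \<le> x i then 1 / sqrt n else - (1 / sqrt n)) else 0)"

lemma sign_round_in_sign_vectors: "sign_round n x \<in> sign_vectors n"
  by (auto simp: sign_round_def sign_vectors_def)

text \<open>With y_i = n x_i^2 we have \<Sum> y_i = n and (sqrt y_i - 1)^2 = n (x_i - s_i)^2, so
  \<Sum> (2 sqrt y_i - 2) = -n D.\<close>
lemma prod_scaled_squares_le_exp:
  assumes "(\<Sum>i<n. (x i)^2) = 1"
  shows "(\<Prod>i<n. real n * (x i)^2) \<le> exp (- (real n * (\<Sum>i<n. (x i - sign_round n x i)^2)))"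
proof -
  define y where "y i = real n * (x i)^2" for i
  have y_nonneg: "0 \<le> y i" for i by (simp add: y_def)
  have sqrt_y: "(sqrt (y i) - 1)^2 = real n * (x i - sign_round n x i)^2" if "i < n" for i
  proof -
    have "sqrt (y i) = sqrt n * \<bar>x i\<bar>" by (simp add: y_def real_sqrt_mult)
    moreover have "(x i - sign_round n x i)^2 = (\<bar>x i\<bar> - 1 / sqrt n)^2"
      using that by (auto simp: sign_round_def power2_eq_square algebra_simps)
    ultimately show ?thesis
      using that by (simp add: power2_eq_square field_simps)
  qed
  have "(\<Sum>i<n. 2 * sqrt (y i) - 2) = (\<Sum>i<n. (y i - 1) - (sqrt (y i) - 1)^2)"
    by (intro sum.cong) (auto simp: power2_diff y_nonneg)
  also have "\<dots> = (\<Sum>i<n. y i) - real n - (\<Sum>i<n. real n * (x i - sign_round n x i)^2)"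
    by (simp add: sum_subtractf sqrt_y)
  also have "\<dots> = - (real n * (\<Sum>i<n. (x i - sign_round n x i)^2))"
    using assms by (simp add: y_def sum_distrib_left[symmetric])
  finally have exponent: "(\<Sum>i<n. 2 * sqrt (y i) - 2)
                           = - (real n * (\<Sum>i<n. (x i - sign_round n x i)^2))" .
  have "(\<Prod>i<n. y i) \<le> (\<Prod>i<n. exp (2 * sqrt (y i) - 2))"
    by (intro prod_mono) (simp add: y_nonneg le_exp_two_sqrt_minus_two)
  also have "\<dots> = exp (\<Sum>i<n. 2 * sqrt (y i) - 2)" by (simp add: exp_sum)
  finally show ?thesis unfolding exponent by (simp add: y_def)
qed

lemma pG_le_MaxCut_plus:
  assumes "n > 0" "cubic_graph n E" "16000000 \<le> real k"
    and x: "(\<Sum>i<n. (x i)^2) = 1"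
  shows "pG n E k x \<le> MaxCut n E + 1/1000"
proof -
  define s where "s = sign_round n x"
  define D where "D = (\<Sum>i<n. (x i - s i)^2)"
  define P where "P = (\<Prod>i<n. (real n * (x i)^2) ^ k)"
  have s: "s \<in> sign_vectors n" unfolding s_def by (rule sign_round_in_sign_vectors)
  have D_nonneg: "0 \<le> D" unfolding D_def by (simp add: sum_nonneg)
  have MaxCut_half: "1/2 \<le> MaxCut n E" using MaxCut_ge_half[OF assms(1,2)] .
  have pG: "pG n E k x = QG n E x * P" unfolding pG_def P_def by simp
  have P_nonneg: "0 \<le> P" unfolding P_def by (simp add: prod_nonneg)
  have "P = (\<Prod>i<n. real n * (x i)^2) ^ k" unfolding P_def by (simp add: prod_power_distrib)
  also have "\<dots> \<le> exp (- (real n * D)) ^ k"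
    using prod_scaled_squares_le_exp[OF x] unfolding D_def s_def
    by (intro power_mono) (simp_all add: prod_nonneg)
  also have "\<dots> = exp (- (real k * (real n * D)))" by (simp add: exp_of_nat_mult[symmetric])
  also have "\<dots> \<le> exp (- (real k * D))"
    using assms(1) D_nonneg by (simp add: mult_left_mono mult_le_cancel_right1)
  finally have P_le: "P \<le> exp (- (real k * D))" .
  show ?thesis
  proof (cases "D < 1/4000^2")
    case True
    have "QG n E x \<le> QG n E s + 1/4000 + D * 4000 + D"
      using QG_le_perturbation[OF assms(2) sum_squares_sign_vector[OF assms(1) s], of "1/4000" x]
      unfolding D_def by simp
    then have "QG n E x \<le> MaxCut n E + 1/1000" using QG_le_MaxCut[OF s, of E] True by (simp add: power2_eq_square)
    moreover have "exp (- (real k * D)) \<le> 1" using D_nonneg by simp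
    then have "P \<le> 1" using P_le by linarith
    then have "QG n E x * P \<le> max 0 (QG n E x)"
      using P_nonneg by (cases "0 \<le> QG n E x") (auto simp: mult_left_le mult_nonpos_nonneg)
    ultimately show ?thesis unfolding pG using MaxCut_half by linarith
  next
    case False
    then have "1 \<le> real k * D"
      using mult_mono[OF assms(3), of "1/4000^2" D] by simp
    then have "exp (- (real k * D)) \<le> exp (-1)" by simp
    then have "P \<le> 1/2" using P_le exp_minus_one_le_half by linarith
    moreover have "QG n E x * P \<le> P"
      using QG_le_one[OF assms(2) x] P_nonneg mult_nonpos_nonneg[of "QG n E x" P]
      by (cases "0 \<le> QG n E x") (auto simp: mult_left_le_one_le)
    ultimately show ?thesis unfolding pG using MaxCut_half by linarith
  qed
qed

theorem mainTheorem19: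
  shows "\<exists>C::real. \<forall>k::nat. \<forall>n::nat. \<forall>E.
           0 < k \<and> C \<le> real k \<and> 0 < n \<and> cubic_graph n E \<longrightarrow>
           Opt n E k < (332 / 331) * MaxCut n E"
proof (intro exI allI impI)
  fix k n E
  assume "0 < k \<and> (16000000::real) \<le> real k \<and> 0 < n \<and> cubic_graph n E"
  then have n: "0 < n" and G: "cubic_graph n E" and k: "16000000 \<le> real k" by auto
  have "sign_round n (\<lambda>_. 0) \<in> {x. (\<Sum>i<n. (x i)^2) = 1 \<and> (\<forall>i\<ge>n. x i = 0)}"
    using sum_squares_sign_vector[OF n sign_round_in_sign_vectors[of n "\<lambda>_. 0"]]
      sign_round_in_sign_vectors[of n "\<lambda>_. 0"]
    by (auto simp: sign_vectors_def)
  then have "Opt n E k \<le> MaxCut n E + 1/1000"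
    unfolding Opt_def using pG_le_MaxCut_plus[OF n G k] by (intro cSUP_least) auto
  moreover have "1/2 \<le> MaxCut n E" using MaxCut_ge_half[OF n G] .
  ultimately show "Opt n E k < (332 / 331) * MaxCut n E" by linarith
qed

end
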